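(* Let $(X,\beta)$ be a locally finite prechart. For all $x,y\in X$, $\mathsf{bd}_\beta(x,y)=\inf_{i\in\mathbb{N}}\Phi^{(i)}_\beta(x,y)$, where $\Phi^{(0)}_\beta$ is the discrete pseudometric on $X$ and $\Phi^{(i+1)}_\beta=\Phi_\beta(\Phi^{(i)}_\beta)$.
   Context: Fix a set $V=\{v_1,v_2,\dots\}$ of variables and a set $\Sigma$ of letters. A prechart is a pair $(X,\beta)$ with $\beta:X\to P_{\mathrm{fin}}(\Sigma\times X+V)$; write $x\xrightarrow{a}x'$ iff $(a,x')\in\beta(x)$. It is locally finite if from each state only finitely many states are reachable by transitions. A 1-bounded pseudometric on $X$ is $d:X\times X\to[0,1]$ with $d(x,x)=0$, symmetry and triangle inequality; $D_X$ is the set of these, ordered pointwise. The discrete pseudometric is $\top(x,y)=0$ if $x=y$ and $1$ otherwise. For $d\in D_X$, $d^\uparrow$ on $\Sigma\times X+V$ is $d^\uparrow((a,x),(a,y))=\tfrac12 d(x,y)$, $d^\uparrow(m,n)=0$ if $m=n$, $1$ otherwise. $\mathcal H(d)(A,B)=\max\{\sup_{x\in A}\inf_{y\in B}d(x,y),\sup_{y\in B}\inf_{x\in A}d(y,x)\}$ with $\sup\emptyset=0$, $\inf\emptyset=1$. $\Phi_\beta(d)(x,y)=\mathcal H(d^\uparrow)(\beta(x),\beta(y))$, a monotone map on $D_X$; $\mathsf{bd}_\beta$ is its least fixpoint. *)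

theory Defs
  imports Main "HOL-Library.Extended_Real"
begin

(* A prechart on state type 'x, letters 'a, variables 'v:
   beta :: 'x => ('a * 'x + 'v) set, required to have finite values. *)
definition prechart :: "('x \<Rightarrow> ('a \<times> 'x + 'v) set) \<Rightarrow> bool" where
  "prechart \<beta> \<longleftrightarrow> (\<forall>x. finite (\<beta> x))"

definition trans_rel :: "('x \<Rightarrow> ('a \<times> 'x + 'v) set) \<Rightarrow> ('x \<times> 'x) set" where
  "trans_rel \<beta> = {(x, x'). \<exists>a. Inl (a, x') \<in> \<beta> x}"

definition locally_finite :: "('x \<Rightarrow> ('a \<times> 'x + 'v) set) \<Rightarrow> bool" where
  "locally_finite \<beta> \<longleftrightarrow> (\<forall>x. finite {y. (x, y) \<in> (trans_rel \<beta>)\<^sup>*})"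

definition pseudometric1 :: "('x \<Rightarrow> 'x \<Rightarrow> real) \<Rightarrow> bool" where
  "pseudometric1 d \<longleftrightarrow>
     (\<forall>x y. 0 \<le> d x y \<and> d x y \<le> 1) \<and> (\<forall>x. d x x = 0) \<and>
     (\<forall>x y. d x y = d y x) \<and> (\<forall>x y z. d x z \<le> d x y + d y z)"

definition discrete_pm :: "'x \<Rightarrow> 'x \<Rightarrow> real" where
  "discrete_pm x y = (if x = y then 0 else 1)"

definition lift_pm :: "('x \<Rightarrow> 'x \<Rightarrow> real) \<Rightarrow> ('a \<times> 'x + 'v) \<Rightarrow> ('a \<times> 'x + 'v) \<Rightarrow> real" where
  "lift_pm d u w = (case (u, w) of
      (Inl (a, x), Inl (b, y)) \<Rightarrow> (if a = b then d x y / 2 else 1)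
    | (Inr m, Inr n) \<Rightarrow> (if m = n then 0 else 1)
    | _ \<Rightarrow> 1)"

definition sup0 :: "real set \<Rightarrow> real" where
  "sup0 S = (if S = {} then 0 else Sup S)"

definition inf1 :: "real set \<Rightarrow> real" where
  "inf1 S = (if S = {} then 1 else Inf S)"

definition hausdorff :: "('b \<Rightarrow> 'b \<Rightarrow> real) \<Rightarrow> 'b set \<Rightarrow> 'b set \<Rightarrow> real" where
  "hausdorff d A B = max (sup0 ((\<lambda>x. inf1 ((\<lambda>y. d x y) ` B)) ` A))
                         (sup0 ((\<lambda>y. inf1 ((\<lambda>x. d y x) ` A)) ` B))"

definition Phi :: "('x \<Rightarrow> ('a \<times> 'x + 'v) set) \<Rightarrow> ('x \<Rightarrow> 'x \<Rightarrow> real) \<Rightarrow> ('x \<Rightarrow> 'x \<Rightarrow> real)" where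
  "Phi \<beta> d x y = hausdorff (lift_pm d) (\<beta> x) (\<beta> y)"

definition bd :: "('x \<Rightarrow> ('a \<times> 'x + 'v) set) \<Rightarrow> ('x \<Rightarrow> 'x \<Rightarrow> real)" where
  "bd \<beta> = (THE d. pseudometric1 d \<and> Phi \<beta> d = d \<and>
                  (\<forall>e. pseudometric1 e \<and> Phi \<beta> e = e \<longrightarrow> d \<le> e))"

definition Phi_iter :: "('x \<Rightarrow> ('a \<times> 'x + 'v) set) \<Rightarrow> nat \<Rightarrow> ('x \<Rightarrow> 'x \<Rightarrow> real)" where
  "Phi_iter \<beta> i = (Phi \<beta> ^^ i) discrete_pm"

end

(* The lifting halves the distance between transitions with the same letter, and the Hausdorff
   construction is nonexpansive, so Phi is a 1/2-contraction for the sup distance on 1-bounded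
   pseudometrics. Hence the iterates from the discrete pseudometric decrease, Phi_iter (i + k) stays
   within 1/2^i of Phi_iter i, and their infimum is a uniform limit which is a fixpoint. Every
   fixpoint e is within 1/2^i of Phi_iter i (compare Phi^i e with Phi^i of the discrete
   pseudometric), so the fixpoint is unique, hence least. *)

theory Submission
  imports Defs
begin

lemma pseudometric1D:
  assumes "pseudometric1 d"
  shows pseudometric1_nonneg: "0 \<le> d x y"
    and pseudometric1_le_1: "d x y \<le> 1"
    and pseudometric1_refl: "d x x = 0"
    and pseudometric1_sym: "d x y = d y x"
    and pseudometric1_triangle: "d x z \<le> d x y + d y z"
  using assms unfolding pseudometric1_def by simp_all

lemma pseudometric1_dist_le_1:
  "pseudometric1 d \<Longrightarrow> pseudometric1 e \<Longrightarrow> \<bar>d x y - e x y\<bar> \<le> 1"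
  using pseudometric1_nonneg pseudometric1_le_1 by (smt (verit))

lemma inf1_image_le: "finite B \<Longrightarrow> y \<in> B \<Longrightarrow> inf1 (f ` B) \<le> f y"
  unfolding inf1_def by (auto intro!: cInf_lower)

lemma inf1_image_attained:
  assumes "finite B" "B \<noteq> {}"
  obtains y where "y \<in> B" "inf1 (f ` B) = f y"
proof -
  have "inf1 (f ` B) = Min (f ` B)"
    using assms by (simp add: inf1_def cInf_eq_Min)
  moreover have "Min (f ` B) \<in> f ` B"
    using assms by simp
  ultimately show ?thesis
    using that by auto
qed

lemma sup0_image_ge: "finite A \<Longrightarrow> x \<in> A \<Longrightarrow> f x \<le> sup0 (f ` A)"
  unfolding sup0_def by (auto intro!: cSup_upper)

lemma sup0_image_attained:
  assumes "finite A" "A \<noteq> {}"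
  obtains x where "x \<in> A" "sup0 (f ` A) = f x"
proof -
  have "sup0 (f ` A) = Max (f ` A)"
    using assms by (simp add: sup0_def cSup_eq_Max)
  moreover have "Max (f ` A) \<in> f ` A"
    using assms by simp
  ultimately show ?thesis
    using that by auto
qed

lemma sup0_image_le:
  "finite A \<Longrightarrow> 0 \<le> c \<Longrightarrow> (\<And>x. x \<in> A \<Longrightarrow> f x \<le> c) \<Longrightarrow> sup0 (f ` A) \<le> c"
  by (auto simp: sup0_def intro!: cSup_least)

lemma inf1_image_mono_plus:
  assumes "finite B" "0 \<le> c" "\<And>y. y \<in> B \<Longrightarrow> f y \<le> g y + c"
  shows "inf1 (f ` B) \<le> inf1 (g ` B) + c"
proof (cases "B = {}")
  case False
  obtain y where "y \<in> B" "inf1 (g ` B) = g y"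
    using assms(1) False by (rule inf1_image_attained)
  with inf1_image_le[OF assms(1)] assms(3) show ?thesis
    by (smt (verit))
qed (use assms(2) in \<open>simp add: inf1_def\<close>)

lemma sup0_image_mono_plus:
  assumes "finite A" "0 \<le> c" "\<And>x. x \<in> A \<Longrightarrow> f x \<le> g x + c"
  shows "sup0 (f ` A) \<le> sup0 (g ` A) + c"
proof (cases "A = {}")
  case False
  obtain x where "x \<in> A" "sup0 (f ` A) = f x"
    using assms(1) False by (rule sup0_image_attained)
  with sup0_image_ge[OF assms(1)] assms(3) show ?thesis
    by (smt (verit))
qed (use assms(2) in \<open>simp add: sup0_def\<close>)

lemma inf1_image_triangle:
  assumes "pseudometric1 l" "finite C"
  shows "inf1 (l x ` C) \<le> l x y + inf1 (l y ` C)"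
proof (cases "C = {}")
  case False
  obtain z where "z \<in> C" "inf1 (l y ` C) = l y z"
    using assms(2) False by (rule inf1_image_attained)
  with inf1_image_le[OF assms(2)] pseudometric1_triangle[OF assms(1), of x z y] show ?thesis
    by (smt (verit))
qed (use pseudometric1_nonneg[OF assms(1)] in \<open>simp add: inf1_def\<close>)

subsection \<open>The Hausdorff lifting\<close>

lemma hausdorff_sym:
  assumes "pseudometric1 l"
  shows "hausdorff l A B = hausdorff l B A"
proof -
  have "(\<lambda>y. l y x) = l x" for x
    using pseudometric1_sym[OF assms] by auto
  then show ?thesis
    by (simp add: hausdorff_def max.commute)
qed

lemma inf1_le_hausdorff:
  "finite A \<Longrightarrow> x \<in> A \<Longrightarrow> inf1 (l x ` B) \<le> hausdorff l A B"
  unfolding hausdorff_def using sup0_image_ge[of A x "\<lambda>x. inf1 (l x ` B)"] by simp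

lemma inf1_image_in_unit_interval:
  assumes "finite B" "\<And>y. y \<in> B \<Longrightarrow> 0 \<le> f y \<and> f y \<le> 1"
  shows "0 \<le> inf1 (f ` B) \<and> inf1 (f ` B) \<le> 1"
proof (cases "B = {}")
  case False
  obtain y where "y \<in> B" "inf1 (f ` B) = f y"
    using assms(1) False by (rule inf1_image_attained)
  with assms(2) show ?thesis
    by simp
qed (simp add: inf1_def)

lemma sup0_image_in_unit_interval:
  assumes "finite A" "\<And>x. x \<in> A \<Longrightarrow> 0 \<le> f x \<and> f x \<le> 1"
  shows "0 \<le> sup0 (f ` A) \<and> sup0 (f ` A) \<le> 1"
proof (cases "A = {}")
  case False
  obtain x where "x \<in> A" "sup0 (f ` A) = f x"
    using assms(1) False by (rule sup0_image_attained)
  with assms(2) show ?thesis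
    by simp
qed (simp add: sup0_def)

lemma inf1_dist_in_unit_interval:
  "pseudometric1 l \<Longrightarrow> finite C \<Longrightarrow> 0 \<le> inf1 (l x ` C) \<and> inf1 (l x ` C) \<le> 1"
  using pseudometric1_nonneg pseudometric1_le_1 by (metis inf1_image_in_unit_interval)

lemma hausdorff_in_unit_interval:
  assumes "pseudometric1 l" "finite A" "finite B"
  shows "0 \<le> hausdorff l A B \<and> hausdorff l A B \<le> 1"
proof -
  have "0 \<le> sup0 ((\<lambda>x. inf1 (l x ` D)) ` C) \<and> sup0 ((\<lambda>x. inf1 (l x ` D)) ` C) \<le> 1"
    if "finite C" "finite D" for C D
    using assms(1) that inf1_dist_in_unit_interval by (intro sup0_image_in_unit_interval) simp_all
  from this[of A B] this[of B A] assms(2,3) show ?thesis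
    unfolding hausdorff_def by auto
qed

lemma hausdorff_self:
  assumes "pseudometric1 l" "finite A"
  shows "hausdorff l A A = 0"
proof -
  have "inf1 (l x ` A) \<le> 0" if "x \<in> A" for x
    using inf1_image_le[OF assms(2) that] pseudometric1_refl[OF assms(1)] by metis
  then have "sup0 ((\<lambda>x. inf1 (l x ` A)) ` A) \<le> 0"
    using assms(2) by (intro sup0_image_le) auto
  with hausdorff_in_unit_interval[OF assms(1,2,2)] show ?thesis
    unfolding hausdorff_def by simp
qed

lemma inf1_le_hausdorff_triangle:
  assumes "pseudometric1 l" "finite A" "finite B" "finite C" "x \<in> A"
  shows "inf1 (l x ` C) \<le> hausdorff l A B + hausdorff l B C"
proof (cases "B = {}")
  case True
  then have "inf1 (l x ` B) = 1"
    by (simp add: inf1_def)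
  with inf1_le_hausdorff[OF assms(2,5), of l B] inf1_dist_in_unit_interval[OF assms(1,4)]
    hausdorff_in_unit_interval[OF assms(1,3,4)]
  show ?thesis
    by (smt (verit))
next
  case False
  obtain y where "y \<in> B" "inf1 (l x ` B) = l x y"
    using assms(3) False by (rule inf1_image_attained)
  with inf1_image_triangle[OF assms(1,4), of x y] inf1_le_hausdorff[OF assms(2,5), of l B]
    inf1_le_hausdorff[OF assms(3), of y l C]
  show ?thesis
    by (smt (verit))
qed

lemma hausdorff_triangle:
  assumes "pseudometric1 l" "finite A" "finite B" "finite C"
  shows "hausdorff l A C \<le> hausdorff l A B + hausdorff l B C"
proof -
  let ?r = "hausdorff l A B + hausdorff l B C"
  have "0 \<le> ?r"
    using hausdorff_in_unit_interval[OF assms(1)] assms by (smt (verit))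
  moreover have "inf1 (l x ` C) \<le> ?r" if "x \<in> A" for x
    using inf1_le_hausdorff_triangle[OF assms that] .
  moreover have "inf1 (l z ` A) \<le> ?r" if "z \<in> C" for z
    using inf1_le_hausdorff_triangle[OF assms(1,4,3,2) that] hausdorff_sym[OF assms(1)] by simp
  ultimately show ?thesis
    unfolding hausdorff_def[of l A C] using assms(2,4) by (simp add: sup0_image_le)
qed

lemma hausdorff_mono_plus:
  assumes "finite A" "finite B" "0 \<le> c" "\<And>u w. f u w \<le> g u w + c"
  shows "hausdorff f A B \<le> hausdorff g A B + c"
proof -
  have "sup0 ((\<lambda>x. inf1 (f x ` D)) ` C) \<le> sup0 ((\<lambda>x. inf1 (g x ` D)) ` C) + c"
    if "finite C" "finite D" for C D
    using that assms(3,4) by (intro sup0_image_mono_plus inf1_image_mono_plus) auto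
  from this[of A B] this[of B A] assms(1,2) show ?thesis
    unfolding hausdorff_def by (auto simp: max_def)
qed

subsection \<open>The operator \<open>Phi\<close> is a contraction\<close>

lemma pseudometric1_lift_pm:
  assumes "pseudometric1 d"
  shows "pseudometric1 (lift_pm d)"
proof -
  note d = pseudometric1D[OF assms]
  have "0 \<le> lift_pm d u w \<and> lift_pm d u w \<le> 1" for u w
  proof -
    have "d x y \<le> 2" for x y
      using d(2)[of x y] by simp
    with d(1) show ?thesis
      by (cases u; cases w) (auto simp: lift_pm_def)
  qed
  moreover have "lift_pm d u u = 0" for u
    using d(3) by (cases u) (auto simp: lift_pm_def)
  moreover have "lift_pm d u w = lift_pm d w u" for u w
    using d(4) by (cases u; cases w) (auto simp: lift_pm_def)
  moreover have "lift_pm d u w \<le> lift_pm d u v + lift_pm d v w" for u v w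
  proof -
    have "d x z / 2 \<le> d x y / 2 + d y z / 2" for x y z
      using d(5)[of x z y] by simp
    moreover have "d x y / 2 \<le> 1 + c" if "0 \<le> c" for x y c
      using d(2)[of x y] that by simp
    moreover have "d x y \<le> 4" for x y
      using d(2)[of x y] by simp
    ultimately show ?thesis
      using d(1,5) by (cases u; cases v; cases w) (auto simp: lift_pm_def)
  qed
  ultimately show ?thesis
    unfolding pseudometric1_def by blast
qed

lemma lift_pm_mono_plus:
  assumes "0 \<le> c" "\<And>x y. d x y \<le> d' x y + c"
  shows "lift_pm d u w \<le> lift_pm d' u w + c / 2"
proof -
  have "d x y / 2 \<le> d' x y / 2 + c / 2" for x y
    using assms(2)[of x y] by simp
  with assms(1) show ?thesis
    by (cases u; cases w) (auto simp: lift_pm_def)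
qed

lemma Phi_pseudometric1:
  assumes "prechart \<beta>" "pseudometric1 d"
  shows "pseudometric1 (Phi \<beta> d)"
proof -
  have fin: "finite (\<beta> x)" for x
    using assms(1) unfolding prechart_def by blast
  note l = pseudometric1_lift_pm[OF assms(2)]
  show ?thesis
    unfolding pseudometric1_def Phi_def
    using hausdorff_in_unit_interval[OF l fin fin] hausdorff_self[OF l fin] hausdorff_sym[OF l]
      hausdorff_triangle[OF l fin fin fin] by blast
qed

lemma Phi_mono_plus:
  assumes "prechart \<beta>" "0 \<le> c" "\<And>x y. d x y \<le> d' x y + c"
  shows "Phi \<beta> d x y \<le> Phi \<beta> d' x y + c / 2"
  using assms unfolding Phi_def prechart_def
  by (intro hausdorff_mono_plus lift_pm_mono_plus) simp_all

lemma Phi_contraction: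
  assumes "prechart \<beta>" "\<And>x y. \<bar>d x y - d' x y\<bar> \<le> c"
  shows "\<bar>Phi \<beta> d x y - Phi \<beta> d' x y\<bar> \<le> c / 2"
proof -
  have c: "0 \<le> c"
    using assms(2) abs_ge_zero order.trans by blast
  have "d u v \<le> d' u v + c" "d' u v \<le> d u v + c" for u v
    using assms(2)[of u v] by linarith+
  from Phi_mono_plus[of \<beta> c d d' x y, OF assms(1) c this(1)]
    Phi_mono_plus[of \<beta> c d' d x y, OF assms(1) c this(2)]
  show ?thesis
    by (smt (verit))
qed

lemma funpow_Phi_contraction:
  assumes "prechart \<beta>" "\<And>x y. \<bar>d x y - d' x y\<bar> \<le> c"
  shows "\<bar>(Phi \<beta> ^^ n) d x y - (Phi \<beta> ^^ n) d' x y\<bar> \<le> c / 2 ^ n"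
proof (induction n arbitrary: x y)
  case (Suc n)
  have "\<bar>Phi \<beta> ((Phi \<beta> ^^ n) d) x y - Phi \<beta> ((Phi \<beta> ^^ n) d') x y\<bar> \<le> c / 2 ^ n / 2"
    using Phi_contraction[OF assms(1) Suc.IH] .
  then show ?case
    by (simp add: mult.commute)
qed (use assms(2) in simp)

lemma Phi_iter_Suc: "Phi_iter \<beta> (Suc i) = Phi \<beta> (Phi_iter \<beta> i)"
  unfolding Phi_iter_def by simp

lemma Phi_iter_add: "Phi_iter \<beta> (i + k) = (Phi \<beta> ^^ i) (Phi_iter \<beta> k)"
  unfolding Phi_iter_def by (simp add: funpow_add)

lemma pseudometric1_discrete_pm: "pseudometric1 discrete_pm"
  unfolding pseudometric1_def discrete_pm_def by auto

lemma Phi_iter_pseudometric1: "prechart \<beta> \<Longrightarrow> pseudometric1 (Phi_iter \<beta> i)"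
  by (induction i) (simp_all add: Phi_iter_Suc Phi_pseudometric1 Phi_iter_def pseudometric1_discrete_pm)

lemma decseq_Phi_iter:
  assumes "prechart \<beta>"
  shows "decseq (\<lambda>i. Phi_iter \<beta> i x y)"
proof (rule decseq_SucI)
  fix i
  show "Phi_iter \<beta> (Suc i) x y \<le> Phi_iter \<beta> i x y"
  proof (induction i arbitrary: x y)
    case 0
    from Phi_iter_pseudometric1[OF assms, of 1] show ?case
      unfolding pseudometric1_def by (simp add: Phi_iter_def discrete_pm_def)
  next
    case (Suc i)
    have "Phi \<beta> (Phi_iter \<beta> (Suc i)) x y \<le> Phi \<beta> (Phi_iter \<beta> i) x y + 0 / 2"
      using Suc.IH by (intro Phi_mono_plus[OF assms]) simp_all
    then show ?case
      by (simp only: Phi_iter_Suc[of \<beta> "Suc i"] Phi_iter_Suc[of \<beta> i])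
  qed
qed

lemma Phi_iter_dist:
  assumes "prechart \<beta>"
  shows "\<bar>Phi_iter \<beta> (i + k) x y - Phi_iter \<beta> i x y\<bar> \<le> 1 / 2 ^ i"
proof -
  have "\<bar>Phi_iter \<beta> k u v - discrete_pm u v\<bar> \<le> 1" for u v
    by (rule pseudometric1_dist_le_1[OF Phi_iter_pseudometric1[OF assms] pseudometric1_discrete_pm])
  from funpow_Phi_contraction[of \<beta> "Phi_iter \<beta> k" discrete_pm 1 i x y, OF assms this] show ?thesis
    by (simp only: Phi_iter_add Phi_iter_def[of \<beta> i])
qed

subsection \<open>The limit of the iterates\<close>

lemma real_le_if_le_plus_div_pow2:
  fixes a b c :: real
  assumes "\<And>n. a \<le> b + c / 2 ^ n"
  shows "a \<le> b"
proof (rule field_le_epsilon)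
  fix e :: real
  assume "0 < e"
  obtain n where "\<bar>c\<bar> / e < 2 ^ n"
    using real_arch_pow[of 2] by auto
  then have "c / 2 ^ n \<le> e"
    using \<open>0 < e\<close> by (simp add: field_simps)
  with assms[of n] show "a \<le> b + e"
    by linarith
qed

lemma real_eq_if_dist_le_div_pow2:
  fixes a b c :: real
  assumes "\<And>n. \<bar>a - b\<bar> \<le> c / 2 ^ n"
  shows "a = b"
proof -
  have "a \<le> b + c / 2 ^ n" "b \<le> a + c / 2 ^ n" for n
    using assms[of n] by linarith+
  then show ?thesis
    using real_le_if_le_plus_div_pow2[of a b c] real_le_if_le_plus_div_pow2[of b a c] by simp
qed

definition Phi_limit :: "('x \<Rightarrow> ('a \<times> 'x + 'v) set) \<Rightarrow> 'x \<Rightarrow> 'x \<Rightarrow> real" where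
  "Phi_limit \<beta> x y = (INF i. Phi_iter \<beta> i x y)"

lemma Phi_limit_le_Phi_iter:
  assumes "prechart \<beta>"
  shows "Phi_limit \<beta> x y \<le> Phi_iter \<beta> i x y"
  unfolding Phi_limit_def
  using pseudometric1_nonneg[OF Phi_iter_pseudometric1[OF assms]]
  by (intro cINF_lower bdd_belowI2[where m = 0]) auto

lemma Phi_iter_le_Phi_limit_plus:
  assumes "prechart \<beta>"
  shows "Phi_iter \<beta> i x y \<le> Phi_limit \<beta> x y + 1 / 2 ^ i"
proof -
  have "Phi_iter \<beta> i x y - 1 / 2 ^ i \<le> Phi_iter \<beta> j x y" for j
  proof -
    have "Phi_iter \<beta> (i + (j - i)) x y \<le> Phi_iter \<beta> j x y"
      using decseqD[OF decseq_Phi_iter[OF assms]] by simp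
    with Phi_iter_dist[OF assms, of i "j - i" x y] show ?thesis
      by linarith
  qed
  then have "Phi_iter \<beta> i x y - 1 / 2 ^ i \<le> Phi_limit \<beta> x y"
    unfolding Phi_limit_def by (intro cINF_greatest) auto
  then show ?thesis
    by simp
qed

lemma Phi_limit_dist:
  "prechart \<beta> \<Longrightarrow> \<bar>Phi_limit \<beta> x y - Phi_iter \<beta> i x y\<bar> \<le> 1 / 2 ^ i"
  using Phi_limit_le_Phi_iter Phi_iter_le_Phi_limit_plus by (smt (verit))

lemma pseudometric1_Phi_limit:
  assumes "prechart \<beta>"
  shows "pseudometric1 (Phi_limit \<beta>)"
proof -
  note iter = pseudometric1D[OF Phi_iter_pseudometric1[OF assms]]
  note below = Phi_limit_le_Phi_iter[OF assms]
  have "0 \<le> Phi_limit \<beta> x y" for x y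
    unfolding Phi_limit_def using iter(1) by (intro cINF_greatest) auto
  moreover have "Phi_limit \<beta> x y \<le> 1" for x y
    using below[of x y 0] iter(2)[of 0 x y] by linarith
  moreover have "Phi_limit \<beta> x x = 0" for x
    using below[of x x 0] iter(3)[of 0 x] \<open>0 \<le> Phi_limit \<beta> x x\<close> by linarith
  moreover have "Phi_limit \<beta> x y = Phi_limit \<beta> y x" for x y
    unfolding Phi_limit_def using iter(4) by simp
  moreover have "Phi_limit \<beta> x z \<le> Phi_limit \<beta> x y + Phi_limit \<beta> y z" for x y z
  proof (rule real_le_if_le_plus_div_pow2[of _ _ 2])
    fix n
    have "Phi_limit \<beta> x z \<le> Phi_iter \<beta> n x y + Phi_iter \<beta> n y z"
      using below[of x z n] iter(5)[of n x z y] by linarith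
    moreover have "(2::real) / 2 ^ n = 1 / 2 ^ n + 1 / 2 ^ n"
      by simp
    ultimately show "Phi_limit \<beta> x z \<le> Phi_limit \<beta> x y + Phi_limit \<beta> y z + 2 / 2 ^ n"
      using Phi_iter_le_Phi_limit_plus[OF assms, of n x y] Phi_iter_le_Phi_limit_plus[OF assms, of n y z]
      by linarith
  qed
  ultimately show ?thesis
    unfolding pseudometric1_def by blast
qed

lemma Phi_Phi_limit:
  assumes "prechart \<beta>"
  shows "Phi \<beta> (Phi_limit \<beta>) = Phi_limit \<beta>"
proof (intro ext real_eq_if_dist_le_div_pow2)
  fix x y i
  have "\<bar>Phi \<beta> (Phi_limit \<beta>) x y - Phi_iter \<beta> (Suc i) x y\<bar> \<le> 1 / 2 ^ Suc i"
    using Phi_contraction[of \<beta> "Phi_limit \<beta>" "Phi_iter \<beta> i" "1 / 2 ^ i", OF assms Phi_limit_dist[OF assms]]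
    by (simp add: Phi_iter_Suc mult.commute)
  with Phi_limit_dist[OF assms, of x y "Suc i"]
  show "\<bar>Phi \<beta> (Phi_limit \<beta>) x y - Phi_limit \<beta> x y\<bar> \<le> 1 / 2 ^ i"
    by simp
qed

lemma Phi_fixpoint_eq_Phi_limit:
  assumes "prechart \<beta>" "pseudometric1 e" "Phi \<beta> e = e"
  shows "e = Phi_limit \<beta>"
proof (intro ext real_eq_if_dist_le_div_pow2)
  fix x y i
  have "\<bar>(Phi \<beta> ^^ i) e x y - (Phi \<beta> ^^ i) discrete_pm x y\<bar> \<le> 1 / 2 ^ i"
    by (rule funpow_Phi_contraction[OF assms(1) pseudometric1_dist_le_1[OF assms(2) pseudometric1_discrete_pm]])
  moreover have "(Phi \<beta> ^^ i) e = e"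
    using assms(3) by (induction i) simp_all
  ultimately have "\<bar>e x y - Phi_iter \<beta> i x y\<bar> \<le> 1 / 2 ^ i"
    unfolding Phi_iter_def by simp
  with Phi_limit_dist[OF assms(1), of x y i]
  show "\<bar>e x y - Phi_limit \<beta> x y\<bar> \<le> 2 / 2 ^ i"
    by simp
qed

lemma bd_eq_unique_fixpoint:
  assumes "pseudometric1 d" "Phi \<beta> d = d"
    and "\<And>e. pseudometric1 e \<Longrightarrow> Phi \<beta> e = e \<Longrightarrow> e = d"
  shows "bd \<beta> = d"
  unfolding bd_def
proof (rule the_equality)
  show "pseudometric1 d \<and> Phi \<beta> d = d \<and> (\<forall>e. pseudometric1 e \<and> Phi \<beta> e = e \<longrightarrow> d \<le> e)"
    using assms by blast
qed (use assms(3) in blast)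

theorem mainTheorem5:
  fixes \<beta> :: "'x \<Rightarrow> ('a \<times> 'x + 'v) set"
  assumes "prechart \<beta>" and "locally_finite \<beta>"
  shows "\<forall>x y. bd \<beta> x y = (INF i. Phi_iter \<beta> i x y)"
proof -
  have "bd \<beta> = Phi_limit \<beta>"
    using pseudometric1_Phi_limit[OF assms(1)] Phi_Phi_limit[OF assms(1)] Phi_fixpoint_eq_Phi_limit[OF assms(1)]
    by (rule bd_eq_unique_fixpoint)
  then show ?thesis
    by (simp add: Phi_limit_def)
qed

end
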